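(* Let $G$ be a graph, let $n\equiv 0 \pmod 4$, and let $v$ be a vertex of $G$ with $\sigma_v(G)\subset\mathbb{Z}$. Let $T_v=\{(j,v):j\in\mathbb{Z}_n\}\subseteq V(\uparrow^{n}G)$, and let $X$ be the graph obtained from $\uparrow^{n}G$ by adding a matching $M$ (a set of pairwise vertex-disjoint edges) each of whose edges joins two vertices of $T_v$. Then $X$ has Laplacian perfect state transfer at time $\frac{\pi}{2}$ between the two end vertices of every edge of $M$. Moreover, $X$ is periodic, with period $\frac{\pi}{2}$, at every vertex of $T_v$ not incident to an edge of $M$.
   Context: All graphs are simple, undirected and unweighted. $\sigma_v(G)$ is the Laplacian eigenvalue support of $v$: the set of distinct eigenvalues $\lambda$ of the Laplacian $L=D-A$ of $G$ with $E_\lambda\mathbf{e}_v\neq\mathbf{0}$, $E_\lambda$ the orthogonal projection onto the $\lambda$-eigenspace. The blow-up $\uparrow^{n}G$ has vertex set $\mathbb{Z}_n\times V(G)$, with $(l,u)\sim(m,w)$ iff $u\sim w$ in $G$. For a graph with Laplacian $L$ and $U(t)=\exp(itL)$: Laplacian perfect state transfer between $a,b$ at time $\tau$ means $U(\tau)\mathbf{e}_a=\gamma\mathbf{e}_b$ for some $\gamma\in\mathbb{C}$; the graph is periodic at $a$ at time $\tau>0$ if $|U(\tau)_{a,a}|=1$. *)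

theory Defs
  imports Complex_Main
begin

definition graph :: "'a set \<Rightarrow> ('a \<Rightarrow> 'a \<Rightarrow> bool) \<Rightarrow> bool" where
  "graph V E \<longleftrightarrow> finite V \<and> (\<forall>x y. E x y \<longrightarrow> x \<in> V \<and> y \<in> V)
     \<and> (\<forall>x y. E x y \<longrightarrow> E y x) \<and> (\<forall>x. \<not> E x x)"

definition degree :: "'a set \<Rightarrow> ('a \<Rightarrow> 'a \<Rightarrow> bool) \<Rightarrow> 'a \<Rightarrow> nat" where
  "degree V E x = card {y \<in> V. E x y}"

text \<open>Laplacian L = D - A, as a V x V real matrix (entries outside V are irrelevant).\<close>
definition laplacian :: "'a set \<Rightarrow> ('a \<Rightarrow> 'a \<Rightarrow> bool) \<Rightarrow> 'a \<Rightarrow> 'a \<Rightarrow> real" where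
  "laplacian V E x y = (if x = y then real (degree V E x) else 0) - (if E x y then 1 else 0)"

fun matpow :: "'a set \<Rightarrow> ('a \<Rightarrow> 'a \<Rightarrow> real) \<Rightarrow> nat \<Rightarrow> 'a \<Rightarrow> 'a \<Rightarrow> real" where
  "matpow V A 0 x y = (if x = y then 1 else 0)"
| "matpow V A (Suc k) x y = (\<Sum>z\<in>V. matpow V A k x z * A z y)"

definition transition :: "'a set \<Rightarrow> ('a \<Rightarrow> 'a \<Rightarrow> bool) \<Rightarrow> real \<Rightarrow> 'a \<Rightarrow> 'a \<Rightarrow> complex" where
  "transition V E t x y =
     (\<Sum>k. (\<i> * complex_of_real t) ^ k / of_nat (fact k) * complex_of_real (matpow V (laplacian V E) k x y))"

text \<open>Vectors in R^V are functions vanishing outside V; standard inner product.\<close>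
definition inner_on :: "'a set \<Rightarrow> ('a \<Rightarrow> real) \<Rightarrow> ('a \<Rightarrow> real) \<Rightarrow> real" where
  "inner_on V x y = (\<Sum>u\<in>V. x u * y u)"

definition eigenspace_lap :: "'a set \<Rightarrow> ('a \<Rightarrow> 'a \<Rightarrow> bool) \<Rightarrow> real \<Rightarrow> ('a \<Rightarrow> real) set" where
  "eigenspace_lap V E lam = {x. (\<forall>u. u \<notin> V \<longrightarrow> x u = 0)
      \<and> (\<forall>u\<in>V. (\<Sum>w\<in>V. laplacian V E u w * x w) = lam * x u)}"

definition is_lap_eigenvalue :: "'a set \<Rightarrow> ('a \<Rightarrow> 'a \<Rightarrow> bool) \<Rightarrow> real \<Rightarrow> bool" where
  "is_lap_eigenvalue V E lam \<longleftrightarrow> (\<exists>x\<in>eigenspace_lap V E lam. x \<noteq> (\<lambda>_. 0))"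

definition proj_on :: "'a set \<Rightarrow> ('a \<Rightarrow> real) set \<Rightarrow> ('a \<Rightarrow> real) \<Rightarrow> ('a \<Rightarrow> real)" where
  "proj_on V S x = (THE p. p \<in> S \<and> (\<forall>y\<in>S. inner_on V (\<lambda>u. x u - p u) y = 0))"

definition unit_vec :: "'a \<Rightarrow> 'a \<Rightarrow> real" where
  "unit_vec v = (\<lambda>u. if u = v then 1 else 0)"

definition eig_support :: "'a set \<Rightarrow> ('a \<Rightarrow> 'a \<Rightarrow> bool) \<Rightarrow> 'a \<Rightarrow> real set" where
  "eig_support V E v = {lam. is_lap_eigenvalue V E lam
      \<and> proj_on V (eigenspace_lap V E lam) (unit_vec v) \<noteq> (\<lambda>_. 0)}"

text \<open>Blow-up: vertex set Z_n x V with Z_n represented as {0..<n}.\<close>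
definition blowup_V :: "nat \<Rightarrow> 'a set \<Rightarrow> (nat \<times> 'a) set" where
  "blowup_V n V = {0..<n} \<times> V"

definition blowup_E :: "nat \<Rightarrow> ('a \<Rightarrow> 'a \<Rightarrow> bool) \<Rightarrow> nat \<times> 'a \<Rightarrow> nat \<times> 'a \<Rightarrow> bool" where
  "blowup_E n E x y \<longleftrightarrow> fst x < n \<and> fst y < n \<and> E (snd x) (snd y)"

definition lap_pst :: "'a set \<Rightarrow> ('a \<Rightarrow> 'a \<Rightarrow> bool) \<Rightarrow> 'a \<Rightarrow> 'a \<Rightarrow> real \<Rightarrow> bool" where
  "lap_pst V E a b tau \<longleftrightarrow>
     (\<exists>\<gamma>::complex. \<forall>x\<in>V. transition V E tau x a = \<gamma> * (if x = b then 1 else 0))"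

definition lap_periodic :: "'a set \<Rightarrow> ('a \<Rightarrow> 'a \<Rightarrow> bool) \<Rightarrow> 'a \<Rightarrow> real \<Rightarrow> bool" where
  "lap_periodic V E a tau \<longleftrightarrow> tau > 0 \<and> cmod (transition V E tau a a) = 1"

end

(* Three families of Laplacian eigenvectors of the blow-up X carry the argument: lifts
   (l, u) \<mapsto> r u of eigenvectors r of G, with eigenvalue n \<mu>; vectors supported on T_v,
   summing to zero over T_v and constant across each edge of M, with eigenvalue n deg v; and
   e_a - e_b for an edge {a, b} of M, with eigenvalue n deg v + 2. As 4 divides n,
   U(\<pi>/2) fixes the second family and negates the third; it fixes the lift of e_v
   because e_v has components only at integral eigenvalues. Then
   e_a = (e_a - e_b)/2 + Y + lift(e_v)/n with Y in the second family shows
   U(\<pi>/2) e_a = e_b, and for unmatched a, e_a = Y + lift(e_v)/n shows U(\<pi>/2) e_a = e_a.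
   To relate the eigenvalue support (defined through orthogonal projections) to such
   decompositions, every vector is written as a sum of eigenvectors; this uses the minimal
   polynomial annihilating the vector, whose roots are real and simple by symmetry. *)

theory Submission
  imports Defs "HOL-Computational_Algebra.Fundamental_Theorem_Algebra" "HOL-Library.Function_Algebras"
begin

section \<open>Spectral decomposition of real symmetric matrices\<close>

definition mat_vec :: "'a set \<Rightarrow> ('a \<Rightarrow> 'a \<Rightarrow> real) \<Rightarrow> ('a \<Rightarrow> complex) \<Rightarrow> 'a \<Rightarrow> complex" where
  "mat_vec V A f = (\<lambda>x. \<Sum>y\<in>V. complex_of_real (A x y) * f y)"

definition poly_mat_vec :: "'a set \<Rightarrow> ('a \<Rightarrow> 'a \<Rightarrow> real) \<Rightarrow> complex poly \<Rightarrow> ('a \<Rightarrow> complex) \<Rightarrow> 'a \<Rightarrow> complex" where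
  "poly_mat_vec V A p f = (\<lambda>x. \<Sum>i\<le>degree p. coeff p i * (mat_vec V A ^^ i) f x)"

lemma mat_vec_lincomb:
  "mat_vec V A (\<lambda>x. \<Sum>i\<in>I. c i * g i x) x = (\<Sum>i\<in>I. c i * mat_vec V A (g i) x)"
proof -
  have "mat_vec V A (\<lambda>x. \<Sum>i\<in>I. c i * g i x) x = (\<Sum>y\<in>V. \<Sum>i\<in>I. c i * (complex_of_real (A x y) * g i y))"
    unfolding mat_vec_def by (simp add: sum_distrib_left mult_ac)
  also have "\<dots> = (\<Sum>i\<in>I. c i * mat_vec V A (g i) x)"
    unfolding mat_vec_def by (subst sum.swap) (simp add: sum_distrib_left)
  finally show ?thesis .
qed

lemma mat_vec_scale: "mat_vec V A (\<lambda>x. c * f x) x = c * mat_vec V A f x"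
  unfolding mat_vec_def by (simp add: sum_distrib_left mult_ac)

lemma poly_mat_vec_eq_sum_le:
  assumes "degree p \<le> N"
  shows "poly_mat_vec V A p f x = (\<Sum>i\<le>N. coeff p i * (mat_vec V A ^^ i) f x)"
  unfolding poly_mat_vec_def
  by (rule sum.mono_neutral_left) (use assms in \<open>auto simp: coeff_eq_0 not_le\<close>)

lemma poly_mat_vec_0 [simp]: "poly_mat_vec V A 0 f x = 0"
  by (simp add: poly_mat_vec_def)

lemma poly_mat_vec_const [simp]: "poly_mat_vec V A [:c:] f x = c * f x"
  by (simp add: poly_mat_vec_def)

lemma poly_mat_vec_1 [simp]: "poly_mat_vec V A 1 f x = f x"
  by (simp add: poly_mat_vec_def)

lemma poly_mat_vec_add:
  "poly_mat_vec V A (p + q) f x = poly_mat_vec V A p f x + poly_mat_vec V A q f x"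
proof -
  let ?N = "max (degree p) (degree q)"
  have "degree (p + q) \<le> ?N" by (simp add: degree_add_le)
  then show ?thesis
    by (simp add: poly_mat_vec_eq_sum_le[of _ ?N] sum.distrib algebra_simps)
qed

lemma poly_mat_vec_diff:
  "poly_mat_vec V A (p - q) f x = poly_mat_vec V A p f x - poly_mat_vec V A q f x"
  using poly_mat_vec_add[of V A "p - q" q f x] by simp

lemma poly_mat_vec_smult: "poly_mat_vec V A (smult c p) f x = c * poly_mat_vec V A p f x"
  by (simp add: poly_mat_vec_eq_sum_le[of _ "degree p"] sum_distrib_left mult.assoc)

lemma poly_mat_vec_sum:
  "finite I \<Longrightarrow> poly_mat_vec V A (\<Sum>i\<in>I. p i) f x = (\<Sum>i\<in>I. poly_mat_vec V A (p i) f x)"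
  by (induction I rule: finite_induct) (auto simp: poly_mat_vec_add)

lemma poly_mat_vec_monom: "poly_mat_vec V A (monom c k) f x = c * (mat_vec V A ^^ k) f x"
proof -
  have "poly_mat_vec V A (monom c k) f x = (\<Sum>i\<le>k. if k = i then c * (mat_vec V A ^^ i) f x else 0)"
    unfolding poly_mat_vec_eq_sum_le[OF degree_monom_le] by (intro sum.cong) (auto simp: coeff_monom)
  then show ?thesis by simp
qed

lemma poly_mat_vec_pCons:
  "poly_mat_vec V A (pCons a p) f x = a * f x + mat_vec V A (poly_mat_vec V A p f) x"
proof -
  have "poly_mat_vec V A (pCons a p) f x
      = (\<Sum>i\<le>Suc (degree p). coeff (pCons a p) i * (mat_vec V A ^^ i) f x)"
    by (rule poly_mat_vec_eq_sum_le) (simp add: degree_pCons_le)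
  also have "\<dots> = a * f x + (\<Sum>i\<le>degree p. coeff p i * (mat_vec V A ^^ Suc i) f x)"
    by (subst sum.atMost_Suc_shift) simp
  also have "(\<Sum>i\<le>degree p. coeff p i * (mat_vec V A ^^ Suc i) f x) = mat_vec V A (poly_mat_vec V A p f) x"
    unfolding poly_mat_vec_def by (subst mat_vec_lincomb) simp
  finally show ?thesis .
qed

lemma poly_mat_vec_linear: "poly_mat_vec V A [:-\<mu>, 1:] f x = mat_vec V A f x - \<mu> * f x"
proof -
  have "poly_mat_vec V A [:1:] f = f" by (simp add: fun_eq_iff)
  then show ?thesis by (simp add: poly_mat_vec_pCons)
qed

lemma poly_mat_vec_mult:
  "poly_mat_vec V A (p * q) f = poly_mat_vec V A p (poly_mat_vec V A q f)"
proof (induction p)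
  case 0
  then show ?case by (simp add: fun_eq_iff)
next
  case (pCons a p)
  have "poly_mat_vec V A (pCons a p * q) f x
      = a * poly_mat_vec V A q f x + mat_vec V A (poly_mat_vec V A (p * q) f) x" for x
    by (simp add: poly_mat_vec_add poly_mat_vec_smult poly_mat_vec_pCons)
  then show ?case by (simp add: fun_eq_iff pCons.IH poly_mat_vec_pCons)
qed

lemma poly_mat_vec_zero_row:
  assumes "\<And>y. A x y = 0" and "f x = 0"
  shows "poly_mat_vec V A p f x = 0"
  using assms by (induction p) (auto simp: poly_mat_vec_pCons mat_vec_def)

lemma sum_fun_apply: "(\<Sum>i\<in>I. g i) x = (\<Sum>i\<in>I. g i x)"
  by (induction I rule: infinite_finite_induct) auto

definition annihilates :: "'a set \<Rightarrow> ('a \<Rightarrow> 'a \<Rightarrow> real) \<Rightarrow> complex poly \<Rightarrow> ('a \<Rightarrow> complex) \<Rightarrow> bool" where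
  "annihilates V A p f \<longleftrightarrow> p \<noteq> 0 \<and> (\<forall>x. poly_mat_vec V A p f x = 0)"

text \<open>The Krylov vectors \<open>A\<^sup>i f\<close>, \<open>i \<le> card V\<close>, are too many to be independent.\<close>

lemma annihilator_exists:
  fixes f :: "'a \<Rightarrow> complex"
  assumes fin: "finite V" and out: "\<And>x y. x \<notin> V \<Longrightarrow> A x y = 0"
    and fout: "\<And>x. x \<notin> V \<Longrightarrow> f x = 0"
  shows "\<exists>p. annihilates V A p f"
proof -
  define P where "P i = (mat_vec V A ^^ i) f" for i
  define N where "N = card V"
  have P_outside: "P i x = 0" if "x \<notin> V" for i x
    using that fout out by (cases i) (auto simp: P_def mat_vec_def)
  show ?thesis
  proof (cases "inj_on P {..N}")
    case False
    then obtain i j where ij: "i \<le> N" "j \<le> N" "i \<noteq> j" "P i = P j"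
      unfolding inj_on_def by auto
    let ?p = "monom 1 i - monom (1::complex) j"
    have "coeff ?p i = 1" using ij by (simp add: coeff_monom)
    then have "?p \<noteq> 0" by (metis coeff_0 zero_neq_one)
    moreover have "poly_mat_vec V A ?p f x = 0" for x
      using ij by (simp add: poly_mat_vec_diff poly_mat_vec_monom P_def)
    ultimately show ?thesis unfolding annihilates_def by blast
  next
    case True
    interpret vs: vector_space "\<lambda>(c::complex) (g::'a \<Rightarrow> complex). (\<lambda>x. c * g x)"
      by unfold_locales (auto simp: algebra_simps fun_eq_iff)
    define S where "S = P ` {..N}"
    define T where "T = (\<lambda>u x. if x = u then (1::complex) else 0) ` V"
    have "S \<subseteq> vs.span T"
    proof
      fix g assume "g \<in> S"
      then have g_outside: "\<forall>x. x \<notin> V \<longrightarrow> g x = 0" using P_outside S_def by auto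
      have "g = (\<Sum>u\<in>V. (\<lambda>x. g u * (if x = u then 1 else 0)))"
      proof
        fix x
        have "(\<Sum>u\<in>V. (\<lambda>x. g u * (if x = u then 1 else 0))) x = (\<Sum>u\<in>V. if x = u then g u else 0)"
          unfolding sum_fun_apply by (rule sum.cong) auto
        then show "g x = (\<Sum>u\<in>V. (\<lambda>x. g u * (if x = u then 1 else 0))) x"
          using g_outside fin by (cases "x \<in> V") simp_all
      qed
      also have "\<dots> \<in> vs.span T"
        by (intro vs.span_sum vs.span_scale vs.span_base) (auto simp: T_def)
      finally show "g \<in> vs.span T" .
    qed
    moreover have "card T < card S"
      using True card_image_le[OF fin, of "\<lambda>u x. if x = u then (1::complex) else 0"]
      by (simp add: S_def T_def N_def card_image)
    ultimately have "vs.dependent S"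
      using vs.independent_span_bound[of T S] fin by (auto simp: T_def)
    then obtain c where c: "\<exists>s\<in>S. c s \<noteq> 0" "(\<Sum>s\<in>S. (\<lambda>x. c s * s x)) = 0"
      using vs.dependent_finite[of S] by (auto simp: S_def)
    define p where "p = (\<Sum>i\<le>N. monom (c (P i)) i)"
    from c(1) obtain i where "i \<le> N" "c (P i) \<noteq> 0" unfolding S_def by auto
    then have "coeff p i \<noteq> 0"
      by (simp add: p_def coeff_sum coeff_monom)
    then have "p \<noteq> 0" by auto
    moreover have "poly_mat_vec V A p f x = 0" for x
    proof -
      have "poly_mat_vec V A p f x = (\<Sum>i\<le>N. c (P i) * P i x)"
        by (simp add: p_def poly_mat_vec_sum poly_mat_vec_monom P_def)
      also have "\<dots> = (\<Sum>s\<in>S. c s * s x)"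
        unfolding S_def by (subst sum.reindex[OF True]) simp
      also have "\<dots> = 0" using c(2) by (simp add: sum_fun_apply fun_eq_iff)
      finally show ?thesis .
    qed
    ultimately show ?thesis unfolding annihilates_def by blast
  qed
qed

lemma lagrange_basis_sum_eq_1:
  fixes R :: "'a::field set"
  assumes fin: "finite R" and ne: "R \<noteq> {}"
  defines "q z \<equiv> \<Prod>y\<in>R - {z}. [:-y, 1:]"
  shows "(\<Sum>z\<in>R. smult (1 / poly (q z) z) (q z)) = 1"
proof (rule ccontr)
  let ?L = "\<Sum>z\<in>R. smult (1 / poly (q z) z) (q z)"
  assume "?L \<noteq> 1"
  then have nz: "?L - 1 \<noteq> 0" by simp
  have poly_q: "poly (q z) y = (\<Prod>w\<in>R - {z}. y - w)" for z y
    by (simp add: q_def poly_prod)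
  have "poly (?L - 1) y = 0" if y: "y \<in> R" for y
  proof -
    have "poly (q z) y = 0" if "z \<in> R - {y}" for z
      unfolding poly_q using fin that y by (auto simp: prod_zero_iff)
    then have "poly ?L y = (1 / poly (q y) y) * poly (q y) y"
      unfolding poly_sum using fin y by (simp add: sum.remove)
    also have "\<dots> = 1"
      unfolding poly_q using fin by (simp add: prod_zero_iff)
    finally show ?thesis by simp
  qed
  then have "card R \<le> card {y. poly (?L - 1) y = 0}"
    by (intro card_mono poly_roots_finite[OF nz]) auto
  also have "\<dots> \<le> degree (?L - 1)" by (rule card_poly_roots_bound[OF nz])
  also have "\<dots> \<le> card R - 1"
  proof -
    have "degree (q z) = card R - 1" if "z \<in> R" for z
      unfolding q_def using fin that by (subst degree_prod_sum_eq) auto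
    then show ?thesis by (intro degree_diff_le degree_sum_le fin) auto
  qed
  moreover have "card R > 0" using fin ne by (simp add: card_gt_0_iff)
  ultimately show False by linarith
qed

definition cinner :: "'a set \<Rightarrow> ('a \<Rightarrow> complex) \<Rightarrow> ('a \<Rightarrow> complex) \<Rightarrow> complex" where
  "cinner V f g = (\<Sum>x\<in>V. f x * cnj (g x))"

lemma cinner_self_eq_0D:
  assumes "finite V" "cinner V f f = 0" "x \<in> V"
  shows "f x = 0"
proof -
  have "cinner V f f = (\<Sum>x\<in>V. complex_of_real ((cmod (f x))\<^sup>2))"
    unfolding cinner_def
    by (intro sum.cong refl) (simp add: complex_mult_cnj cmod_power2 flip: of_real_power)
  then have "complex_of_real (\<Sum>x\<in>V. (cmod (f x))\<^sup>2) = 0"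
    using assms(2) by (simp only: of_real_sum)
  then have "(\<Sum>x\<in>V. (cmod (f x))\<^sup>2) = 0" by (simp only: of_real_eq_0_iff)
  then show ?thesis using assms(1,3) by (subst (asm) sum_nonneg_eq_0_iff) auto
qed

lemma cinner_eigenvector:
  assumes "\<And>x. mat_vec V A w x = \<mu> * w x"
  shows "cinner V (mat_vec V A w) g = \<mu> * cinner V w g"
    and "cinner V g (mat_vec V A w) = cnj \<mu> * cinner V g w"
  unfolding cinner_def assms by (simp_all add: sum_distrib_left mult_ac)

locale real_symmetric_matrix =
  fixes V :: "'a set" and A :: "'a \<Rightarrow> 'a \<Rightarrow> real"
  assumes finite_V: "finite V"
    and symmetric: "A x y = A y x"
    and outside: "x \<notin> V \<Longrightarrow> A x y = 0"
begin

lemma cinner_mat_vec: "cinner V (mat_vec V A f) g = cinner V f (mat_vec V A g)"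
proof -
  have "cinner V (mat_vec V A f) g = (\<Sum>x\<in>V. \<Sum>y\<in>V. complex_of_real (A x y) * f y * cnj (g x))"
    unfolding cinner_def mat_vec_def by (simp add: sum_distrib_right)
  also have "\<dots> = cinner V f (mat_vec V A g)"
    unfolding cinner_def mat_vec_def
    by (subst sum.swap) (simp add: sum_distrib_left symmetric mult_ac)
  finally show ?thesis .
qed

lemma eigenvalue_real:
  assumes eig: "\<And>x. mat_vec V A w x = \<mu> * w x" and w: "x \<in> V" "w x \<noteq> 0"
  shows "cnj \<mu> = \<mu>"
proof -
  have "cinner V w w \<noteq> 0" using cinner_self_eq_0D[OF finite_V _ w(1)] w(2) by blast
  moreover have "\<mu> * cinner V w w = cnj \<mu> * cinner V w w"
    using cinner_mat_vec[of w w] cinner_eigenvector[OF eig] by simp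
  ultimately show ?thesis by simp
qed

text \<open>There are no Jordan chains of length two.\<close>

lemma eigenvector_not_in_range:
  assumes real: "cnj \<mu> = \<mu>"
    and eig: "\<And>x. mat_vec V A w x = \<mu> * w x"
    and range: "\<And>x. w x = mat_vec V A g x - \<mu> * g x" and x: "x \<in> V"
  shows "w x = 0"
proof -
  have "cinner V w w = cinner V (\<lambda>x. mat_vec V A g x - \<mu> * g x) w"
    by (simp add: range[symmetric])
  also have "\<dots> = cinner V (mat_vec V A g) w - \<mu> * cinner V g w"
    unfolding cinner_def by (simp add: sum_subtractf sum_distrib_left algebra_simps)
  also have "\<dots> = cinner V g (mat_vec V A w) - cnj \<mu> * cinner V g w"
    using cinner_mat_vec[of g w] real by simp
  also have "\<dots> = 0" by (simp add: eig cinner_def sum_subtractf sum_distrib_left mult_ac)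
  finally show ?thesis using cinner_self_eq_0D[OF finite_V _ x] by blast
qed

context
  fixes f :: "'a \<Rightarrow> complex" and p :: "complex poly"
  assumes f_outside: "\<And>x. x \<notin> V \<Longrightarrow> f x = 0"
    and annihilates: "annihilates V A p f"
    and minimal: "\<And>q. annihilates V A q f \<Longrightarrow> degree p \<le> degree q"
begin

lemma minimal_annihilator_cofactor_eigenvector:
  assumes pq: "p = [:-z, 1:] * q"
  shows "\<exists>x\<in>V. poly_mat_vec V A q f x \<noteq> 0"
    and "\<And>x. mat_vec V A (poly_mat_vec V A q f) x = z * poly_mat_vec V A q f x"
proof -
  have "p \<noteq> 0" and p_f: "\<And>x. poly_mat_vec V A p f x = 0"
    using annihilates by (auto simp: annihilates_def)
  then have "q \<noteq> 0" using pq by auto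
  then have "degree p = degree [:-z, 1:] + degree q"
    unfolding pq by (intro degree_mult_eq) auto
  then have "\<not> annihilates V A q f" using minimal[of q] by auto
  then obtain x where "poly_mat_vec V A q f x \<noteq> 0"
    using \<open>q \<noteq> 0\<close> by (auto simp: annihilates_def)
  then show "\<exists>x\<in>V. poly_mat_vec V A q f x \<noteq> 0"
    using poly_mat_vec_zero_row[of A x f] outside f_outside by blast
  show "mat_vec V A (poly_mat_vec V A q f) x = z * poly_mat_vec V A q f x" for x
    using p_f[of x] unfolding pq poly_mat_vec_mult by (simp add: poly_mat_vec_linear)
qed

lemma minimal_annihilator_root_real:
  assumes "poly p z = 0"
  shows "cnj z = z"
proof -
  have "[:-z, 1:] dvd p" using assms by (simp add: poly_eq_0_iff_dvd)
  then obtain q where "p = [:-z, 1:] * q" by (elim dvdE)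
  from minimal_annihilator_cofactor_eigenvector[OF this] show ?thesis
    using eigenvalue_real by blast
qed

lemma minimal_annihilator_rsquarefree: "rsquarefree p"
  unfolding rsquarefree_def
proof (intro conjI allI)
  show "p \<noteq> 0" using annihilates by (simp add: annihilates_def)
  fix z
  show "order z p = 0 \<or> order z p = 1"
  proof (rule ccontr)
    assume "\<not> (order z p = 0 \<or> order z p = 1)"
    then have "[:-z, 1:] ^ 2 dvd p" using order_divides[of z 2 p] \<open>p \<noteq> 0\<close> by simp
    then obtain h where ph: "p = [:-z, 1:] ^ 2 * h" by (elim dvdE)
    define q where "q = [:-z, 1:] * h"
    have pq: "p = [:-z, 1:] * q" unfolding ph q_def by (simp only: power2_eq_square mult.assoc)
    obtain x where x: "x \<in> V" "poly_mat_vec V A q f x \<noteq> 0"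
      using minimal_annihilator_cofactor_eigenvector(1)[OF pq] by blast
    have "cnj z = z" by (rule minimal_annihilator_root_real) (simp add: ph)
    moreover have "poly_mat_vec V A q f y = mat_vec V A (poly_mat_vec V A h f) y
        - z * poly_mat_vec V A h f y" for y
      unfolding q_def poly_mat_vec_mult by (simp add: poly_mat_vec_linear)
    ultimately have "poly_mat_vec V A q f x = 0"
      by (rule eigenvector_not_in_range[OF _ minimal_annihilator_cofactor_eigenvector(2)[OF pq] _ x(1)])
    with x(2) show False by contradiction
  qed
qed

end

lemma eigen_decomposition_complex:
  fixes f :: "'a \<Rightarrow> complex"
  assumes "\<forall>x. x \<notin> V \<longrightarrow> f x = 0"
  shows "\<exists>R u. finite R \<and> (\<forall>z\<in>R. cnj z = z)
     \<and> (\<forall>z\<in>R. \<forall>x. mat_vec V A (u z) x = z * u z x \<and> (x \<notin> V \<longrightarrow> u z x = 0))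
     \<and> (\<forall>x. f x = (\<Sum>z\<in>R. u z x))"
proof -
  have f_outside: "x \<notin> V \<Longrightarrow> f x = 0" for x using assms by blast
  obtain p0 where "annihilates V A p0 f"
    using annihilator_exists[where A = A and f = f, OF finite_V outside f_outside] by blast
  then obtain p where p: "annihilates V A p f"
    and minimal: "\<And>q. annihilates V A q f \<Longrightarrow> degree p \<le> degree q"
    using ex_has_least_nat[of "\<lambda>p. annihilates V A p f" p0 degree] by blast
  have "p \<noteq> 0" and p_f: "\<And>x. poly_mat_vec V A p f x = 0"
    using p by (auto simp: annihilates_def)
  define R where "R = {z. poly p z = 0}"
  define q where "q z = (\<Prod>y\<in>R - {z}. [:-y, 1:])" for z
  define u where "u z x = 1 / poly (q z) z * poly_mat_vec V A (q z) f x" for z x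
  have finR: "finite R" unfolding R_def by (rule poly_roots_finite[OF \<open>p \<noteq> 0\<close>])
  have "smult (lead_coeff p) (\<Prod>z\<in>R. [:-z, 1:]) = p"
    unfolding R_def
    by (rule complex_poly_decompose_rsquarefree[OF minimal_annihilator_rsquarefree[OF f_outside p minimal]])
  then have prod_annihilates: "poly_mat_vec V A (\<Prod>z\<in>R. [:-z, 1:]) f x = 0" for x
    using \<open>p \<noteq> 0\<close> p_f poly_mat_vec_smult[of V A "lead_coeff p" "\<Prod>z\<in>R. [:-z, 1:]" f x] by simp
  have eig: "mat_vec V A (u z) x = z * u z x" if "z \<in> R" for z x
  proof -
    have "(\<Prod>y\<in>R. [:-y, 1:]) = [:-z, 1:] * q z"
      unfolding q_def using finR that by (simp add: prod.remove)
    then have "poly_mat_vec V A [:-z, 1:] (poly_mat_vec V A (q z) f) x = 0"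
      using prod_annihilates[of x] by (simp only: poly_mat_vec_mult)
    then have "mat_vec V A (poly_mat_vec V A (q z) f) x = z * poly_mat_vec V A (q z) f x"
      by (simp add: poly_mat_vec_linear)
    then show ?thesis unfolding u_def mat_vec_scale by simp
  qed
  have u_outside: "u z x = 0" if "x \<notin> V" for z x
    unfolding u_def using poly_mat_vec_zero_row[of A x f] outside f_outside that by simp
  have "f x = (\<Sum>z\<in>R. u z x)" for x
  proof (cases "R = {}")
    case True
    then show ?thesis using prod_annihilates[of x] by simp
  next
    case False
    have "f x = poly_mat_vec V A (\<Sum>z\<in>R. smult (1 / poly (q z) z) (q z)) f x"
      unfolding q_def lagrange_basis_sum_eq_1[OF finR False] by simp
    then show ?thesis unfolding u_def by (simp add: poly_mat_vec_sum[OF finR] poly_mat_vec_smult)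
  qed
  moreover have "\<forall>z\<in>R. cnj z = z"
    using minimal_annihilator_root_real[OF f_outside p minimal] by (simp add: R_def)
  ultimately show ?thesis
    using finR eig u_outside by (intro exI[of _ R] exI[of _ u]) blast
qed

lemma eigen_decomposition:
  fixes f :: "'a \<Rightarrow> real"
  assumes f_outside: "\<forall>x. x \<notin> V \<longrightarrow> f x = 0"
  shows "\<exists>F r. finite F \<and> (\<forall>\<mu>\<in>F. (\<forall>x. x \<notin> V \<longrightarrow> r \<mu> x = 0)
      \<and> (\<forall>x\<in>V. (\<Sum>y\<in>V. A x y * r \<mu> y) = \<mu> * r \<mu> x)) \<and> (\<forall>x. f x = (\<Sum>\<mu>\<in>F. r \<mu> x))"
proof -
  have "\<forall>x. x \<notin> V \<longrightarrow> complex_of_real (f x) = 0" using f_outside by simp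
  from eigen_decomposition_complex[OF this]
  obtain R u where R: "finite R" "\<forall>z\<in>R. cnj z = z"
    and u: "\<forall>z\<in>R. \<forall>x. mat_vec V A (u z) x = z * u z x \<and> (x \<notin> V \<longrightarrow> u z x = 0)"
    and f: "\<forall>x. complex_of_real (f x) = (\<Sum>z\<in>R. u z x)"
    by (elim exE conjE)
  have Re_R: "complex_of_real (Re z) = z" if "z \<in> R" for z
    using R(2) that by (auto simp: complex_eq_iff)
  define r where "r \<mu> x = Re (u (complex_of_real \<mu>) x)" for \<mu> x
  have r_Re: "r (Re z) = (\<lambda>x. Re (u z x))" if "z \<in> R" for z
    using Re_R[OF that] by (simp add: r_def fun_eq_iff)
  have "finite (Re ` R)" using R(1) by simp
  moreover have "(\<forall>x. x \<notin> V \<longrightarrow> r \<mu> x = 0) \<and> (\<forall>x\<in>V. (\<Sum>y\<in>V. A x y * r \<mu> y) = \<mu> * r \<mu> x)"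
    if "\<mu> \<in> Re ` R" for \<mu>
  proof -
    obtain z where z: "z \<in> R" "\<mu> = Re z" using \<open>\<mu> \<in> Re ` R\<close> by blast
    have "(\<Sum>y\<in>V. A x y * r \<mu> y) = Re (mat_vec V A (u z) x)" for x
      unfolding mat_vec_def z(2) r_Re[OF z(1)] by (simp add: Re_sum)
    also have "Re (mat_vec V A (u z) x) = \<mu> * r \<mu> x" for x
    proof -
      have "mat_vec V A (u z) x = complex_of_real \<mu> * u z x"
        using u z Re_R[OF z(1)] by simp
      then show ?thesis using r_Re[OF z(1)] z(2) by simp
    qed
    finally show ?thesis using u z r_Re[OF z(1)] by simp
  qed
  moreover have "f x = (\<Sum>\<mu>\<in>Re ` R. r \<mu> x)" for x
  proof -
    have inj: "inj_on Re R" by (rule inj_onI) (metis Re_R)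
    have "f x = Re (\<Sum>z\<in>R. u z x)" using f by (metis Re_complex_of_real)
    also have "\<dots> = (\<Sum>z\<in>R. Re (u z x))" by (rule Re_sum)
    also have "\<dots> = (\<Sum>\<mu>\<in>Re ` R. r \<mu> x)"
      by (simp add: sum.reindex[OF inj] r_Re)
    finally show ?thesis .
  qed
  ultimately show ?thesis by blast
qed

end

section \<open>Laplacian eigenspaces and the eigenvalue support\<close>

lemma laplacian_symmetric: "graph V E \<Longrightarrow> laplacian V E x y = laplacian V E y x"
  unfolding laplacian_def graph_def by auto

lemma laplacian_outside: "graph V E \<Longrightarrow> x \<notin> V \<Longrightarrow> laplacian V E x y = 0"
  unfolding laplacian_def graph_def Defs.degree_def by auto

lemma laplacian_mult_eq_sum_neighbours:
  assumes "finite W" and "x \<in> W"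
  shows "(\<Sum>y\<in>W. laplacian W R x y * f y) = (\<Sum>y\<in>{y\<in>W. R x y}. f x - f y)"
proof -
  have "(\<Sum>y\<in>W. laplacian W R x y * f y)
      = real (Defs.degree W R x) * f x - (\<Sum>y\<in>W. if R x y then f y else 0)"
    using assms unfolding laplacian_def
    by (simp add: left_diff_distrib sum_subtractf if_distrib[of "\<lambda>a. a * _"] cong: if_cong)
  also have "\<dots> = (\<Sum>y\<in>{y\<in>W. R x y}. f x - f y)"
    using assms(1) by (simp add: Defs.degree_def sum.inter_filter sum_subtractf)
  finally show ?thesis .
qed

lemma laplacian_eigen_decomposition:
  assumes G: "graph V E" and fout: "\<forall>x. x \<notin> V \<longrightarrow> f x = 0"
  shows "\<exists>F r. finite F \<and> (\<forall>\<mu>\<in>F. r \<mu> \<in> eigenspace_lap V E \<mu>) \<and> (\<forall>x. f x = (\<Sum>\<mu>\<in>F. r \<mu> x))"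
proof -
  interpret real_symmetric_matrix V "laplacian V E"
    using G by unfold_locales (auto simp: graph_def laplacian_symmetric laplacian_outside)
  from eigen_decomposition[OF fout]
  obtain F r where "finite F"
    and "\<forall>\<mu>\<in>F. (\<forall>x. x \<notin> V \<longrightarrow> r \<mu> x = 0)
      \<and> (\<forall>x\<in>V. (\<Sum>y\<in>V. laplacian V E x y * r \<mu> y) = \<mu> * r \<mu> x)"
    and "\<forall>x. f x = (\<Sum>\<mu>\<in>F. r \<mu> x)"
    by (elim exE conjE)
  then show ?thesis unfolding eigenspace_lap_def by blast
qed

lemma eigenspace_lap_orthogonal:
  assumes G: "graph V E" and a: "a \<in> eigenspace_lap V E \<nu>" and b: "b \<in> eigenspace_lap V E \<mu>"
    and ne: "\<nu> \<noteq> \<mu>"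
  shows "inner_on V a b = 0"
proof -
  let ?L = "laplacian V E"
  have "\<nu> * inner_on V a b = (\<Sum>u\<in>V. (\<Sum>w\<in>V. ?L u w * a w) * b u)"
    using a unfolding inner_on_def eigenspace_lap_def by (simp add: sum_distrib_left mult_ac)
  also have "\<dots> = (\<Sum>w\<in>V. \<Sum>u\<in>V. ?L u w * a w * b u)"
    unfolding sum_distrib_right by (rule sum.swap)
  also have "\<dots> = (\<Sum>w\<in>V. a w * (\<Sum>u\<in>V. ?L w u * b u))"
  proof -
    have entry: "?L u w * a w * b u = a w * (?L w u * b u)" for u w
      using laplacian_symmetric[OF G, of u w] by simp
    show ?thesis unfolding sum_distrib_left by (intro sum.cong refl entry)
  qed
  also have "\<dots> = \<mu> * inner_on V a b"
    using b unfolding inner_on_def eigenspace_lap_def by (simp add: sum_distrib_left mult_ac)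
  finally have "(\<nu> - \<mu>) * inner_on V a b = 0" by (simp add: algebra_simps)
  then show ?thesis using ne by simp
qed

lemma eigenspace_lap_diff:
  "a \<in> eigenspace_lap V E \<mu> \<Longrightarrow> b \<in> eigenspace_lap V E \<mu> \<Longrightarrow> (\<lambda>u. a u - b u) \<in> eigenspace_lap V E \<mu>"
  unfolding eigenspace_lap_def by (simp add: sum_subtractf algebra_simps)

lemma inner_on_self_eq_0D:
  assumes "finite V" "inner_on V d d = 0" "x \<in> V"
  shows "d x = 0"
  using assms unfolding inner_on_def by (subst (asm) sum_nonneg_eq_0_iff) auto

lemma proj_on_eigenspace_lap:
  assumes G: "graph V E" and finF: "finite F"
    and r: "\<forall>\<nu>\<in>F. r \<nu> \<in> eigenspace_lap V E \<nu>"
    and f: "\<forall>x. f x = (\<Sum>\<nu>\<in>F. r \<nu> x)" and \<mu>: "\<mu> \<in> F"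
  shows "proj_on V (eigenspace_lap V E \<mu>) f = r \<mu>"
  unfolding proj_on_def
proof (rule the_equality)
  have r\<mu>: "r \<mu> \<in> eigenspace_lap V E \<mu>" using r \<mu> by blast
  have orth: "inner_on V (\<lambda>u. f u - r \<mu> u) y = 0" if y: "y \<in> eigenspace_lap V E \<mu>" for y
  proof -
    have "f u - r \<mu> u = (\<Sum>\<nu>\<in>F-{\<mu>}. r \<nu> u)" for u
      using f sum.remove[OF finF \<mu>, of "\<lambda>\<nu>. r \<nu> u"] by simp
    then have "inner_on V (\<lambda>u. f u - r \<mu> u) y = (\<Sum>\<nu>\<in>F-{\<mu>}. inner_on V (r \<nu>) y)"
      unfolding inner_on_def by (simp add: sum_distrib_right sum.swap[of _ V])
    also have "\<dots> = 0"
      by (rule sum.neutral) (use eigenspace_lap_orthogonal[OF G _ y] r in auto)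
    finally show ?thesis .
  qed
  show "r \<mu> \<in> eigenspace_lap V E \<mu> \<and> (\<forall>y\<in>eigenspace_lap V E \<mu>. inner_on V (\<lambda>u. f u - r \<mu> u) y = 0)"
    using r\<mu> orth by blast
  fix p
  assume p: "p \<in> eigenspace_lap V E \<mu> \<and> (\<forall>y\<in>eigenspace_lap V E \<mu>. inner_on V (\<lambda>u. f u - p u) y = 0)"
  define d where "d u = p u - r \<mu> u" for u
  have d: "d \<in> eigenspace_lap V E \<mu>"
    unfolding d_def using p r\<mu> by (intro eigenspace_lap_diff) auto
  have "inner_on V d d = inner_on V (\<lambda>u. f u - r \<mu> u) d - inner_on V (\<lambda>u. f u - p u) d"
    unfolding inner_on_def d_def by (simp add: sum_subtractf[symmetric] algebra_simps)
  then have "inner_on V d d = 0" using p d orth[OF d] by simp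
  then have "p x = r \<mu> x" for x
    using inner_on_self_eq_0D[of V d x] G p r\<mu>
    unfolding d_def graph_def eigenspace_lap_def by (cases "x \<in> V") auto
  then show "p = r \<mu>" by blast
qed

text \<open>Eigenvalues outside the support of \<open>v\<close> may occur in the decomposition, with zero
  component.\<close>

lemma unit_vec_decomposition_integral:
  assumes G: "graph V E" and vV: "v \<in> V" and supp: "eig_support V E v \<subseteq> \<int>"
  obtains F r where "finite F" "\<forall>\<mu>\<in>F. r \<mu> \<in> eigenspace_lap V E \<mu>"
    "\<forall>\<mu>\<in>F. \<mu> \<notin> \<int> \<longrightarrow> r \<mu> = (\<lambda>_. 0)" "\<forall>x. unit_vec v x = (\<Sum>\<mu>\<in>F. r \<mu> x)"
proof -
  have "\<forall>x. x \<notin> V \<longrightarrow> unit_vec v x = 0" using vV by (auto simp: unit_vec_def)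
  from laplacian_eigen_decomposition[OF G this]
  obtain F r where F: "finite F" and r: "\<forall>\<mu>\<in>F. r \<mu> \<in> eigenspace_lap V E \<mu>"
    and e: "\<forall>x. unit_vec v x = (\<Sum>\<mu>\<in>F. r \<mu> x)"
    by (elim exE conjE)
  have "\<mu> \<in> eig_support V E v" if "\<mu> \<in> F" "r \<mu> \<noteq> (\<lambda>_. 0)" for \<mu>
    using proj_on_eigenspace_lap[OF G F r e that(1)] that r
    unfolding eig_support_def is_lap_eigenvalue_def by auto
  then show ?thesis using that[OF F r _ e] supp by blast
qed

section \<open>The transition matrix on eigenvectors\<close>

lemma matpow_eigenvector:
  assumes fin: "finite V" and x: "x \<in> V"
    and eig: "\<forall>z\<in>V. (\<Sum>y\<in>V. L z y * w y) = lam * w z"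
  shows "(\<Sum>y\<in>V. matpow V L k x y * w y) = lam ^ k * w x"
proof (induction k)
  case 0
  then show ?case using fin x by (simp add: if_distrib[of "\<lambda>a. a * _"] cong: if_cong)
next
  case (Suc k)
  have "(\<Sum>y\<in>V. matpow V L (Suc k) x y * w y) = (\<Sum>y\<in>V. \<Sum>z\<in>V. matpow V L k x z * (L z y * w y))"
    by (simp add: sum_distrib_right mult.assoc)
  also have "\<dots> = (\<Sum>z\<in>V. matpow V L k x z * (\<Sum>y\<in>V. L z y * w y))"
    by (subst sum.swap) (simp add: sum_distrib_left)
  also have "\<dots> = lam * (\<Sum>z\<in>V. matpow V L k x z * w z)"
    using eig by (simp add: sum_distrib_left mult_ac)
  finally show ?case using Suc by simp
qed

lemma matpow_abs_le:
  assumes fin: "finite V" and out: "\<forall>z y. y \<notin> V \<longrightarrow> L z y = 0"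
  shows "\<bar>matpow V L k x y\<bar> \<le> (1 + (\<Sum>y\<in>V. \<Sum>z\<in>V. \<bar>L z y\<bar>)) ^ k"
proof (induction k arbitrary: y)
  case 0
  then show ?case by simp
next
  case (Suc k)
  define B where "B = 1 + (\<Sum>y\<in>V. \<Sum>z\<in>V. \<bar>L z y\<bar>)"
  have B_nonneg: "0 \<le> B" unfolding B_def by (simp add: sum_nonneg add_nonneg_nonneg)
  have column: "(\<Sum>z\<in>V. \<bar>L z y\<bar>) \<le> B"
  proof (cases "y \<in> V")
    case True
    then have "(\<Sum>z\<in>V. \<bar>L z y\<bar>) \<le> (\<Sum>y\<in>V. \<Sum>z\<in>V. \<bar>L z y\<bar>)"
      by (intro member_le_sum) (auto intro: sum_nonneg simp: fin)
    then show ?thesis unfolding B_def by simp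
  next
    case False
    then show ?thesis using out B_nonneg by simp
  qed
  have "\<bar>matpow V L (Suc k) x y\<bar> \<le> (\<Sum>z\<in>V. \<bar>matpow V L k x z\<bar> * \<bar>L z y\<bar>)"
    by (simp add: sum_abs[THEN order_trans] abs_mult)
  also have "\<dots> \<le> (\<Sum>z\<in>V. B ^ k * \<bar>L z y\<bar>)"
    using Suc.IH unfolding B_def by (intro sum_mono mult_right_mono) auto
  also have "\<dots> = B ^ k * (\<Sum>z\<in>V. \<bar>L z y\<bar>)" by (simp add: sum_distrib_left)
  also have "\<dots> \<le> B ^ k * B" using column B_nonneg by (simp add: mult_left_mono)
  finally show ?case unfolding B_def by (simp add: mult.commute)
qed

lemma transition_summable:
  assumes G: "graph V E"
  shows "summable (\<lambda>k. (\<i> * complex_of_real t) ^ k / of_nat (fact k)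
    * complex_of_real (matpow V (laplacian V E) k x y))"
proof -
  have fin: "finite V" using G graph_def by auto
  have out: "\<forall>z y. y \<notin> V \<longrightarrow> laplacian V E z y = 0"
    using laplacian_outside[OF G] laplacian_symmetric[OF G] by metis
  define B where "B = 1 + (\<Sum>y\<in>V. \<Sum>z\<in>V. \<bar>laplacian V E z y\<bar>)"
  show ?thesis
  proof (rule summable_comparison_test')
    show "summable (\<lambda>k. inverse (fact k) * (\<bar>t\<bar> * B) ^ k)" by (rule summable_exp)
    fix k :: nat
    have "norm ((\<i> * complex_of_real t) ^ k / of_nat (fact k) * complex_of_real (matpow V (laplacian V E) k x y))
        = \<bar>t\<bar> ^ k / fact k * \<bar>matpow V (laplacian V E) k x y\<bar>"
      by (simp add: norm_mult norm_divide norm_power)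
    also have "\<dots> \<le> \<bar>t\<bar> ^ k / fact k * B ^ k"
      unfolding B_def by (intro mult_left_mono matpow_abs_le[OF fin out]) auto
    also have "\<dots> = inverse (fact k) * (\<bar>t\<bar> * B) ^ k"
      by (simp add: power_mult_distrib field_simps)
    finally show "norm ((\<i> * complex_of_real t) ^ k / of_nat (fact k)
        * complex_of_real (matpow V (laplacian V E) k x y)) \<le> inverse (fact k) * (\<bar>t\<bar> * B) ^ k" .
  qed
qed

definition transition_vec :: "'a set \<Rightarrow> ('a \<Rightarrow> 'a \<Rightarrow> bool) \<Rightarrow> real \<Rightarrow> ('a \<Rightarrow> real) \<Rightarrow> 'a \<Rightarrow> complex" where
  "transition_vec V E t f x = (\<Sum>y\<in>V. transition V E t x y * complex_of_real (f y))"

lemma transition_vec_unit_vec: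
  "finite V \<Longrightarrow> a \<in> V \<Longrightarrow> transition_vec V E t (unit_vec a) x = transition V E t x a"
  unfolding transition_vec_def unit_vec_def by (simp add: if_distrib cong: if_cong)

lemma transition_vec_add:
  "transition_vec V E t (\<lambda>y. f y + g y) x = transition_vec V E t f x + transition_vec V E t g x"
  unfolding transition_vec_def by (simp add: sum.distrib distrib_left)

lemma transition_vec_scale:
  "transition_vec V E t (\<lambda>y. c * f y) x = complex_of_real c * transition_vec V E t f x"
  unfolding transition_vec_def by (simp add: sum_distrib_left mult_ac)

lemma transition_vec_sum:
  "transition_vec V E t (\<lambda>y. \<Sum>i\<in>I. f i y) x = (\<Sum>i\<in>I. transition_vec V E t (f i) x)"
  unfolding transition_vec_def of_real_sum sum_distrib_left by (rule sum.swap)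

lemma transition_vec_eigenvector:
  assumes G: "graph V E" and w: "w \<in> eigenspace_lap V E lam" and x: "x \<in> V"
  shows "transition_vec V E t w x = cis (t * lam) * complex_of_real (w x)"
proof -
  have fin: "finite V" using G graph_def by auto
  have eig: "\<forall>z\<in>V. (\<Sum>y\<in>V. laplacian V E z y * w y) = lam * w z"
    using w by (simp add: eigenspace_lap_def)
  define c where "c k = (\<i> * complex_of_real t) ^ k / of_nat (fact k)" for k
  have "transition_vec V E t w x
      = (\<Sum>y\<in>V. \<Sum>k. c k * complex_of_real (matpow V (laplacian V E) k x y) * complex_of_real (w y))"
    unfolding transition_vec_def transition_def c_def
    by (intro sum.cong refl suminf_mult2 transition_summable[OF G])
  also have "\<dots> = (\<Sum>k. \<Sum>y\<in>V. c k * complex_of_real (matpow V (laplacian V E) k x y) * complex_of_real (w y))"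
    unfolding c_def by (intro suminf_sum[symmetric] summable_mult2 transition_summable[OF G])
  also have "\<dots> = (\<Sum>k. (\<i> * complex_of_real (t * lam)) ^ k /\<^sub>R fact k * complex_of_real (w x))"
  proof (rule suminf_cong)
    fix k
    have "(\<Sum>y\<in>V. c k * complex_of_real (matpow V (laplacian V E) k x y) * complex_of_real (w y))
        = c k * complex_of_real (\<Sum>y\<in>V. matpow V (laplacian V E) k x y * w y)"
      by (simp add: sum_distrib_left mult.assoc)
    also have "\<dots> = c k * complex_of_real (lam ^ k * w x)"
      using matpow_eigenvector[OF fin x eig] by simp
    also have "\<dots> = (\<i> * complex_of_real (t * lam)) ^ k /\<^sub>R fact k * complex_of_real (w x)"
      unfolding c_def by (simp add: scaleR_conv_of_real power_mult_distrib field_simps)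
    finally show "(\<Sum>y\<in>V. c k * complex_of_real (matpow V (laplacian V E) k x y) * complex_of_real (w y))
        = (\<i> * complex_of_real (t * lam)) ^ k /\<^sub>R fact k * complex_of_real (w x)" .
  qed
  also have "\<dots> = exp (\<i> * complex_of_real (t * lam)) * complex_of_real (w x)"
    by (rule sums_unique[symmetric], rule sums_mult2, rule exp_converges)
  finally show ?thesis by (simp add: cis_conv_exp)
qed

lemma cis_quarter_turns_multiple_of_4:
  assumes "n mod 4 = 0" and "z \<in> \<int>"
  shows "cis (pi / 2 * (real n * z)) = 1"
proof -
  obtain m where "n = 4 * m" using assms(1) by auto
  then have "pi / 2 * (real n * z) = 2 * pi * (real m * z)" by simp
  moreover have "real m * z \<in> \<int>" using assms(2) by (simp add: Ints_mult)
  ultimately show ?thesis by (metis cis_multiple_2pi)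
qed

section \<open>Blow-ups with a matching inside one fibre\<close>

definition blowup_lift :: "nat \<Rightarrow> ('a \<Rightarrow> real) \<Rightarrow> nat \<times> 'a \<Rightarrow> real" where
  "blowup_lift n r z = (if fst z < n then r (snd z) else 0)"

locale blowup_matching =
  fixes V :: "'a set" and E :: "'a \<Rightarrow> 'a \<Rightarrow> bool" and n :: nat and v :: 'a
    and M :: "(nat \<times> 'a) set set"
  assumes G: "graph V E"
    and vV: "v \<in> V"
    and M_edges: "\<forall>e\<in>M. \<exists>j k. j < n \<and> k < n \<and> j \<noteq> k \<and> e = {(j, v), (k, v)}"
    and M_matching: "\<forall>e\<in>M. \<forall>f\<in>M. e \<noteq> f \<longrightarrow> e \<inter> f = {}"
begin

abbreviation XV where "XV \<equiv> blowup_V n V"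
abbreviation XE where "XE \<equiv> \<lambda>x y. blowup_E n E x y \<or> {x, y} \<in> M"
abbreviation Tv where "Tv \<equiv> {(j, v) | j. j < n}"

lemma finite_XV: "finite XV"
  using G by (simp add: blowup_V_def graph_def)

lemma matching_edgeD:
  assumes "{x, y} \<in> M"
  shows "x \<in> Tv" "y \<in> Tv" "x \<noteq> y"
proof -
  obtain j k where "j < n" "k < n" "j \<noteq> k" "{x, y} = {(j, v), (k, v)}"
    using M_edges assms by meson
  then show "x \<in> Tv" "y \<in> Tv" "x \<noteq> y" by (auto simp: doubleton_eq_iff)
qed

lemma Tv_subset_XV: "Tv \<subseteq> XV"
  using vV by (auto simp: blowup_V_def)

lemma matching_partner:
  assumes "{a, b} \<in> M" "{a, y} \<in> M"
  shows "y = b"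
proof -
  have "{a, b} = {a, y}"
  proof (rule ccontr)
    assume "{a, b} \<noteq> {a, y}"
    then have "{a, b} \<inter> {a, y} = {}" by (rule M_matching[rule_format, OF assms])
    moreover have "a \<in> {a, b} \<inter> {a, y}" by simp
    ultimately show False by (simp only: empty_iff)
  qed
  then show ?thesis using matching_edgeD(3)[OF assms(2)] by (auto simp: doubleton_eq_iff)
qed

lemma graph_XE: "graph XV XE"
proof -
  have "x \<in> XV \<and> y \<in> XV" if "XE x y" for x y
    using that G matching_edgeD[of x y] Tv_subset_XV
    by (auto simp: blowup_E_def blowup_V_def graph_def mem_Times_iff)
  moreover have "XE y x" if "XE x y" for x y
    using that G by (auto simp: blowup_E_def graph_def insert_commute)
  moreover have "\<not> XE x x" for x
    using G matching_edgeD(3)[of x x] by (auto simp: blowup_E_def graph_def)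
  ultimately show ?thesis using finite_XV unfolding graph_def by blast
qed

lemma XE_laplacian_mult:
  assumes x: "x \<in> XV"
  shows "(\<Sum>y\<in>XV. laplacian XV XE x y * f y)
     = (\<Sum>k<n. \<Sum>w\<in>{w\<in>V. E (snd x) w}. f x - f (k, w)) + (\<Sum>y\<in>{y\<in>XV. {x, y} \<in> M}. f x - f y)"
proof -
  have "\<not> blowup_E n E x y" if "{x, y} \<in> M" for y
    using matching_edgeD(1,2)[OF that] G by (auto simp: blowup_E_def graph_def)
  then have disjoint: "{y\<in>XV. blowup_E n E x y} \<inter> {y\<in>XV. {x, y} \<in> M} = {}" by blast
  have blowup_nbrs: "{y\<in>XV. blowup_E n E x y} = {..<n} \<times> {w\<in>V. E (snd x) w}"
    using x G unfolding blowup_V_def blowup_E_def graph_def by auto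
  have "(\<Sum>y\<in>XV. laplacian XV XE x y * f y) = (\<Sum>y\<in>{y\<in>XV. XE x y}. f x - f y)"
    by (rule laplacian_mult_eq_sum_neighbours[OF finite_XV x])
  also have "{y\<in>XV. XE x y} = {y\<in>XV. blowup_E n E x y} \<union> {y\<in>XV. {x, y} \<in> M}" by auto
  also have "(\<Sum>y\<in>\<dots>. f x - f y)
     = (\<Sum>y\<in>{y\<in>XV. blowup_E n E x y}. f x - f y) + (\<Sum>y\<in>{y\<in>XV. {x, y} \<in> M}. f x - f y)"
    by (rule sum.union_disjoint) (use finite_XV disjoint in auto)
  also have "(\<Sum>y\<in>{y\<in>XV. blowup_E n E x y}. f x - f y) = (\<Sum>k<n. \<Sum>w\<in>{w\<in>V. E (snd x) w}. f x - f (k, w))"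
    unfolding blowup_nbrs sum.cartesian_product by (simp add: case_prod_beta')
  finally show ?thesis .
qed

lemma blowup_lift_eigenvector:
  assumes r: "r \<in> eigenspace_lap V E \<mu>"
  shows "blowup_lift n r \<in> eigenspace_lap XV XE (real n * \<mu>)"
proof -
  have "(\<Sum>y\<in>XV. laplacian XV XE x y * blowup_lift n r y) = real n * \<mu> * blowup_lift n r x"
    if x: "x \<in> XV" for x
  proof -
    obtain l u where lu: "x = (l, u)" "l < n" "u \<in> V" using x by (auto simp: blowup_V_def)
    have "blowup_lift n r x = blowup_lift n r y" if "{x, y} \<in> M" for y
      using matching_edgeD(1,2)[OF that] by (auto simp: blowup_lift_def)
    then have "(\<Sum>y\<in>{y\<in>XV. {x, y} \<in> M}. blowup_lift n r x - blowup_lift n r y) = 0"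
      by (intro sum.neutral) auto
    moreover have "(\<Sum>w\<in>{w\<in>V. E u w}. r u - r w) = (\<Sum>w\<in>V. laplacian V E u w * r w)"
      using G lu(3) by (simp add: laplacian_mult_eq_sum_neighbours graph_def)
    moreover have "\<dots> = \<mu> * r u" using r lu(3) by (simp add: eigenspace_lap_def)
    ultimately show ?thesis
      unfolding XE_laplacian_mult[OF x] using lu by (simp add: blowup_lift_def)
  qed
  moreover have "blowup_lift n r x = 0" if "x \<notin> XV" for x
    using that r by (auto simp: blowup_lift_def blowup_V_def eigenspace_lap_def mem_Times_iff)
  ultimately show ?thesis unfolding eigenspace_lap_def by blast
qed

lemma blowup_part_of_Tv_supported:
  assumes f_Tv: "\<forall>z. z \<notin> Tv \<longrightarrow> f z = 0" and f_sum: "(\<Sum>k<n. f (k, v)) = 0"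
  shows "(\<Sum>k<n. \<Sum>w\<in>{w\<in>V. E u w}. f (l, u) - f (k, w))
    = real n * real (Defs.degree V E v) * f (l, u)"
proof -
  have "(\<Sum>k<n. f (k, w)) = 0" for w
    using f_sum f_Tv by (cases "w = v") auto
  then have "(\<Sum>k<n. \<Sum>w\<in>{w\<in>V. E u w}. f (k, w)) = 0"
    by (subst sum.swap) simp
  moreover have "real (Defs.degree V E u) * f (l, u) = real (Defs.degree V E v) * f (l, u)"
    using f_Tv by (cases "u = v") auto
  ultimately show ?thesis by (simp add: sum_subtractf Defs.degree_def)
qed

definition balanced :: "(nat \<times> 'a \<Rightarrow> real) \<Rightarrow> bool" where
  "balanced f \<longleftrightarrow> (\<forall>z. z \<notin> Tv \<longrightarrow> f z = 0) \<and> (\<Sum>k<n. f (k, v)) = 0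
    \<and> (\<forall>x y. {x, y} \<in> M \<longrightarrow> f x = f y)"

lemma balanced_eigenvector:
  assumes "balanced f"
  shows "f \<in> eigenspace_lap XV XE (real n * real (Defs.degree V E v))"
proof -
  have f_Tv: "\<forall>z. z \<notin> Tv \<longrightarrow> f z = 0" and f_sum: "(\<Sum>k<n. f (k, v)) = 0"
    and f_M: "\<And>x y. {x, y} \<in> M \<Longrightarrow> f x = f y"
    using assms by (auto simp: balanced_def)
  have "(\<Sum>y\<in>XV. laplacian XV XE x y * f y) = real n * real (Defs.degree V E v) * f x"
    if x: "x \<in> XV" for x
  proof -
    have "(\<Sum>y\<in>{y\<in>XV. {x, y} \<in> M}. f x - f y) = 0"
      by (intro sum.neutral) (auto dest: f_M)
    then show ?thesis
      unfolding XE_laplacian_mult[OF x]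
      using blowup_part_of_Tv_supported[OF f_Tv f_sum, where u = "snd x" and l = "fst x"] by simp
  qed
  moreover have "f x = 0" if "x \<notin> XV" for x
    using that f_Tv Tv_subset_XV by blast
  ultimately show ?thesis unfolding eigenspace_lap_def by blast
qed

lemma matching_part_of_edge_difference:
  assumes ab: "{a, b} \<in> M"
  defines "D \<equiv> \<lambda>z. unit_vec a z - unit_vec b z"
  shows "(\<Sum>y\<in>{y\<in>XV. {x, y} \<in> M}. D x - D y) = 2 * D x"
proof -
  have ba: "{b, a} \<in> M" using ab by (simp add: insert_commute)
  have a_Tv: "a \<in> Tv" and b_Tv: "b \<in> Tv" and a_ne_b: "a \<noteq> b" using matching_edgeD[OF ab] by auto
  consider "x = a" | "x = b" | "x \<noteq> a" "x \<noteq> b" by blast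
  then show ?thesis
  proof cases
    case 1
    then have "{y\<in>XV. {x, y} \<in> M} = {b}"
      using matching_partner[OF ab] ab b_Tv Tv_subset_XV by blast
    then show ?thesis using 1 a_ne_b by (simp add: D_def unit_vec_def)
  next
    case 2
    then have "{y\<in>XV. {x, y} \<in> M} = {a}"
      using matching_partner[OF ba] ba a_Tv Tv_subset_XV by blast
    then show ?thesis using 2 a_ne_b by (simp add: D_def unit_vec_def)
  next
    case 3
    have "D y = 0" if "{x, y} \<in> M" for y
    proof -
      have "{y, x} \<in> M" using that by (simp add: insert_commute)
      then have "y \<noteq> a" "y \<noteq> b"
        using 3 matching_partner[OF ab, of x] matching_partner[OF ba, of x] by auto
      then show ?thesis by (simp add: D_def unit_vec_def)
    qed
    then show ?thesis using 3 by (simp add: D_def unit_vec_def)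
  qed
qed

lemma matching_edge_difference_eigenvector:
  assumes ab: "{a, b} \<in> M"
  defines "D \<equiv> \<lambda>z. unit_vec a z - unit_vec b z"
  shows "D \<in> eigenspace_lap XV XE (real n * real (Defs.degree V E v) + 2)"
proof -
  have a_Tv: "a \<in> Tv" and b_Tv: "b \<in> Tv" using matching_edgeD[OF ab] by auto
  have D_Tv: "\<forall>z. z \<notin> Tv \<longrightarrow> D z = 0"
    using a_Tv b_Tv by (auto simp: D_def unit_vec_def)
  have D_sum: "(\<Sum>k<n. D (k, v)) = 0"
    using a_Tv b_Tv by (auto simp: D_def unit_vec_def sum_subtractf)
  have "(\<Sum>y\<in>XV. laplacian XV XE x y * D y) = (real n * real (Defs.degree V E v) + 2) * D x"
    if x: "x \<in> XV" for x
    using blowup_part_of_Tv_supported[OF D_Tv D_sum, where u = "snd x" and l = "fst x"]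
      matching_part_of_edge_difference[OF ab, of x]
    unfolding XE_laplacian_mult[OF x] D_def by (simp add: algebra_simps)
  moreover have "D x = 0" if "x \<notin> XV" for x
    using that D_Tv Tv_subset_XV by blast
  ultimately show ?thesis unfolding eigenspace_lap_def by blast
qed

lemma transition_vec_balanced:
  assumes n4: "n mod 4 = 0" and f: "balanced f" and x: "x \<in> XV"
  shows "transition_vec XV XE (pi / 2) f x = f x"
  using transition_vec_eigenvector[OF graph_XE balanced_eigenvector[OF f] x]
    cis_quarter_turns_multiple_of_4[OF n4, of "real (Defs.degree V E v)"] by simp

lemma transition_vec_matching_edge_difference:
  assumes n4: "n mod 4 = 0" and ab: "{a, b} \<in> M" and x: "x \<in> XV"
  shows "transition_vec XV XE (pi / 2) (\<lambda>z. unit_vec a z - unit_vec b z) x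
    = - complex_of_real (unit_vec a x - unit_vec b x)"
proof -
  let ?d = "real (Defs.degree V E v)"
  have "cis (pi / 2 * (real n * ?d + 2)) = cis (pi / 2 * (real n * ?d)) * cis pi"
    unfolding cis_mult by (rule arg_cong[where f = cis]) (simp add: algebra_simps)
  also have "\<dots> = -1" using cis_quarter_turns_multiple_of_4[OF n4, of ?d] by simp
  finally show ?thesis
    using transition_vec_eigenvector[OF graph_XE matching_edge_difference_eigenvector[OF ab] x]
    by simp
qed

lemma transition_vec_lift_unit_vec:
  assumes n4: "n mod 4 = 0" and supp: "eig_support V E v \<subseteq> \<int>" and x: "x \<in> XV"
  shows "transition_vec XV XE (pi / 2) (blowup_lift n (unit_vec v)) x = blowup_lift n (unit_vec v) x"
proof -
  obtain F r where F: "finite F" and r: "\<forall>\<mu>\<in>F. r \<mu> \<in> eigenspace_lap V E \<mu>"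
    and r_int: "\<forall>\<mu>\<in>F. \<mu> \<notin> \<int> \<longrightarrow> r \<mu> = (\<lambda>_. 0)" and e: "\<forall>x. unit_vec v x = (\<Sum>\<mu>\<in>F. r \<mu> x)"
    using unit_vec_decomposition_integral[OF G vV supp] by blast
  have lift: "blowup_lift n (unit_vec v) = (\<lambda>z. \<Sum>\<mu>\<in>F. blowup_lift n (r \<mu>) z)"
    using e by (simp add: blowup_lift_def fun_eq_iff)
  have "transition_vec XV XE (pi / 2) (blowup_lift n (r \<mu>)) x = blowup_lift n (r \<mu>) x"
    if \<mu>: "\<mu> \<in> F" for \<mu>
  proof (cases "\<mu> \<in> \<int>")
    case True
    have "r \<mu> \<in> eigenspace_lap V E \<mu>" using r \<mu> by blast
    then show ?thesis
      using transition_vec_eigenvector[OF graph_XE blowup_lift_eigenvector x]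
        cis_quarter_turns_multiple_of_4[OF n4 True] by simp
  next
    case False
    then show ?thesis using r_int \<mu> by (simp add: transition_vec_def blowup_lift_def)
  qed
  then show ?thesis unfolding lift transition_vec_sum by (simp add: of_real_sum)
qed

lemma balanced_matched_pair:
  assumes ab: "{a, b} \<in> M"
  shows "balanced (\<lambda>z. (unit_vec a z + unit_vec b z) / 2 - blowup_lift n (unit_vec v) z / real n)"
    (is "balanced ?Y")
proof -
  have a_Tv: "a \<in> Tv" and b_Tv: "b \<in> Tv" and a_ne_b: "a \<noteq> b" using matching_edgeD[OF ab] by auto
  then have "n > 0" by auto
  then have "(\<Sum>k<n. ?Y (k, v)) = 0"
    using a_Tv b_Tv by (auto simp: blowup_lift_def unit_vec_def sum_subtractf
        sum.distrib sum_divide_distrib[symmetric])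
  moreover have "?Y p = ?Y q" if pq: "{p, q} \<in> M" for p q
  proof (cases "{p, q} = {a, b}")
    case True
    then show ?thesis
      using a_ne_b a_Tv b_Tv by (auto simp: blowup_lift_def unit_vec_def doubleton_eq_iff)
  next
    case False
    then have "{p, q} \<inter> {a, b} = {}" by (rule M_matching[rule_format, OF pq ab])
    then show ?thesis
      using matching_edgeD[OF pq] by (auto simp: blowup_lift_def unit_vec_def)
  qed
  ultimately show ?thesis
    using a_Tv b_Tv by (auto simp: balanced_def blowup_lift_def unit_vec_def)
qed

lemma balanced_unmatched:
  assumes a_Tv: "a \<in> Tv" and unmatched: "a \<notin> \<Union>M"
  shows "balanced (\<lambda>z. unit_vec a z - blowup_lift n (unit_vec v) z / real n)"
    (is "balanced ?Y")
proof -
  have "n > 0" using a_Tv by auto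
  then have "(\<Sum>k<n. ?Y (k, v)) = 0"
    using a_Tv by (auto simp: blowup_lift_def unit_vec_def sum_subtractf)
  moreover have "?Y p = ?Y q" if pq: "{p, q} \<in> M" for p q
    using matching_edgeD[OF pq] unmatched pq by (auto simp: blowup_lift_def unit_vec_def)
  ultimately show ?thesis
    using a_Tv by (auto simp: balanced_def blowup_lift_def unit_vec_def)
qed

lemma matching_edge_pst:
  assumes n4: "n mod 4 = 0" and supp: "eig_support V E v \<subseteq> \<int>" and ab: "{a, b} \<in> M"
  shows "lap_pst XV XE a b (pi / 2)"
proof -
  define L where "L = blowup_lift n (unit_vec v)"
  define Y where "Y z = (unit_vec a z + unit_vec b z) / 2 - L z / real n" for z
  have "balanced Y" unfolding Y_def L_def by (rule balanced_matched_pair[OF ab])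
  have a_XV: "a \<in> XV" using matching_edgeD(1)[OF ab] Tv_subset_XV by blast
  have decomposition: "unit_vec a = (\<lambda>z. 1 / 2 * (unit_vec a z - unit_vec b z) + (Y z + 1 / real n * L z))"
    by (simp add: Y_def fun_eq_iff field_simps)
  have "transition XV XE (pi / 2) x a = 1 * (if x = b then 1 else 0)" if x: "x \<in> XV" for x
  proof -
    have "transition XV XE (pi / 2) x a = transition_vec XV XE (pi / 2)
        (\<lambda>z. 1 / 2 * (unit_vec a z - unit_vec b z) + (Y z + 1 / real n * L z)) x"
      unfolding decomposition[symmetric] by (rule transition_vec_unit_vec[OF finite_XV a_XV, symmetric])
    also have "\<dots> = complex_of_real (1 / 2) * transition_vec XV XE (pi / 2) (\<lambda>z. unit_vec a z - unit_vec b z) x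
        + (transition_vec XV XE (pi / 2) Y x
          + complex_of_real (1 / real n) * transition_vec XV XE (pi / 2) L x)"
      by (simp only: transition_vec_add transition_vec_scale)
    also have "\<dots> = complex_of_real (1 / 2) * - complex_of_real (unit_vec a x - unit_vec b x)
        + (complex_of_real (Y x) + complex_of_real (1 / real n) * complex_of_real (L x))"
      unfolding transition_vec_matching_edge_difference[OF n4 ab x]
        transition_vec_balanced[OF n4 \<open>balanced Y\<close> x] L_def transition_vec_lift_unit_vec[OF n4 supp x] ..
    also have "\<dots> = complex_of_real (1 / 2 * - (unit_vec a x - unit_vec b x) + (Y x + 1 / real n * L x))"
      by (simp only: of_real_add of_real_mult of_real_minus)
    also have "\<dots> = 1 * (if x = b then 1 else 0)"
      by (simp add: Y_def unit_vec_def)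
    finally show ?thesis .
  qed
  then show ?thesis unfolding lap_pst_def by blast
qed

lemma unmatched_periodic:
  assumes n4: "n mod 4 = 0" and supp: "eig_support V E v \<subseteq> \<int>"
    and a_Tv: "a \<in> Tv" and unmatched: "a \<notin> \<Union>M"
  shows "lap_periodic XV XE a (pi / 2)"
proof -
  define L where "L = blowup_lift n (unit_vec v)"
  define Y where "Y z = unit_vec a z - L z / real n" for z
  have "balanced Y" unfolding Y_def L_def by (rule balanced_unmatched[OF a_Tv unmatched])
  have a_XV: "a \<in> XV" using a_Tv Tv_subset_XV by blast
  have decomposition: "unit_vec a = (\<lambda>z. Y z + 1 / real n * L z)"
    by (simp add: Y_def fun_eq_iff)
  have "transition XV XE (pi / 2) a a = transition_vec XV XE (pi / 2) (\<lambda>z. Y z + 1 / real n * L z) a"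
    unfolding decomposition[symmetric] by (rule transition_vec_unit_vec[OF finite_XV a_XV, symmetric])
  also have "\<dots> = transition_vec XV XE (pi / 2) Y a
      + complex_of_real (1 / real n) * transition_vec XV XE (pi / 2) L a"
    by (simp only: transition_vec_add transition_vec_scale)
  also have "\<dots> = complex_of_real (Y a + 1 / real n * L a)"
    using transition_vec_balanced[OF n4 \<open>balanced Y\<close> a_XV] transition_vec_lift_unit_vec[OF n4 supp a_XV]
    by (simp add: L_def)
  also have "\<dots> = 1"
    using fun_cong[OF decomposition, of a] by (simp add: unit_vec_def)
  finally show ?thesis by (simp add: lap_periodic_def)
qed

end

theorem theorem10:
  fixes V :: "'a set" and E :: "'a \<Rightarrow> 'a \<Rightarrow> bool" and n :: nat and v :: 'a
    and M :: "(nat \<times> 'a) set set"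
  assumes G: "graph V E"
    and n4: "n mod 4 = 0"
    and vV: "v \<in> V"
    and supp: "eig_support V E v \<subseteq> \<int>"
    and M_edges: "\<forall>e\<in>M. \<exists>j k. j < n \<and> k < n \<and> j \<noteq> k \<and> e = {(j, v), (k, v)}"
    and M_matching: "\<forall>e\<in>M. \<forall>f\<in>M. e \<noteq> f \<longrightarrow> e \<inter> f = {}"
  defines "VX \<equiv> blowup_V n V"
    and "EXg \<equiv> (\<lambda>x y. blowup_E n E x y \<or> {x, y} \<in> M)"
    and "Tv \<equiv> {(j, v) | j. j < n}"
  shows "(\<forall>a b. {a, b} \<in> M \<longrightarrow> lap_pst VX EXg a b (pi / 2))
       \<and> (\<forall>a\<in>Tv. a \<notin> \<Union>M \<longrightarrow> lap_periodic VX EXg a (pi / 2))"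
proof -
  interpret blowup_matching V E n v M
    using G vV M_edges M_matching by unfold_locales
  show ?thesis
    unfolding VX_def EXg_def Tv_def
    using matching_edge_pst[OF n4 supp] unmatched_periodic[OF n4 supp] by blast
qed

end
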